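(* Let $p \geq q$ and $n \geq 1$ be positive integers and let $B$ be a $p \times q$ matrix. Let $C$ be the $(nq+p)\times(nq+p)$ block matrix $$C=\begin{bmatrix} 0 & B & B & \cdots & B\\ B^T & 0 & 0 & \cdots & 0\\ B^T & 0 & 0 & \cdots & 0\\ \vdots & \vdots & \vdots & \ddots & \vdots\\ B^T & 0 & 0 & \cdots & 0\end{bmatrix},$$ with one block row/column of size $p$ followed by $n$ block rows/columns of size $q$ (so $B$ appears $n$ times in the first block row and $B^T$ appears $n$ times in the first block column). Let $D$ be the $(np+q)\times(np+q)$ block matrix $$D=\begin{bmatrix} 0 & B^T & B^T & \cdots & B^T\\ B & 0 & 0 & \cdots & 0\\ B & 0 & 0 & \cdots & 0\\ \vdots & \vdots & \vdots & \ddots & \vdots\\ B & 0 & 0 & \cdots & 0\end{bmatrix},$$ with one block row/column of size $q$ followed by $n$ block rows/columns of size $p$. Then $D$ and $C \oplus 0_{(n-1)(p-q)}$ are cospectral.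
   Context: For matrices $X,Y$, $X\oplus Y$ denotes the block diagonal matrix $\begin{bmatrix} X&0\\0&Y\end{bmatrix}$; $0_m$ is the $m\times m$ zero matrix, and $0$ denotes a zero matrix of appropriate size. Two square matrices are cospectral if they have the same eigenvalues with the same multiplicities (i.e. the same characteristic polynomial). *)

theory Defs
  imports "Jordan_Normal_Form.Char_Poly"
begin

definition direct_sum :: "'a::zero mat \<Rightarrow> 'a mat \<Rightarrow> 'a mat" where
  "direct_sum X Y = four_block_mat X (0\<^sub>m (dim_row X) (dim_col Y)) (0\<^sub>m (dim_row Y) (dim_col X)) Y"

definition cospectral :: "'a::comm_ring_1 mat \<Rightarrow> 'a mat \<Rightarrow> bool" where
  "cospectral X Y \<longleftrightarrow> X \<in> carrier_mat (dim_row X) (dim_row X) \<and>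
      Y \<in> carrier_mat (dim_row Y) (dim_row Y) \<and> char_poly X = char_poly Y"

definition blockC :: "nat \<Rightarrow> nat \<Rightarrow> nat \<Rightarrow> 'a::zero mat \<Rightarrow> 'a mat" where
  "blockC n p q B = mat (n*q+p) (n*q+p) (\<lambda>(i,j).
      if i < p \<and> p \<le> j then B $$ (i, (j-p) mod q)
      else if p \<le> i \<and> j < p then (transpose_mat B) $$ ((i-p) mod q, j)
      else 0)"

definition blockD :: "nat \<Rightarrow> nat \<Rightarrow> nat \<Rightarrow> 'a::zero mat \<Rightarrow> 'a mat" where
  "blockD n p q B = mat (n*p+q) (n*p+q) (\<lambda>(i,j).
      if i < q \<and> q \<le> j then (transpose_mat B) $$ (i, (j-q) mod p)
      else if q \<le> i \<and> j < q then B $$ ((i-q) mod p, j)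
      else 0)"

end

theory Submission
  imports Defs
begin

text \<open>
  Both matrices are bipartite: D = [0, X^T; X, 0] with X the np x q stack of n copies of B,
  and C = [0, Y^T; Y, 0] with Y the nq x p stack of n copies of B^T. A Schur complement gives
  x^q chi_D(x) = x^(np) chi_(X^T X)(x^2), and likewise for C. Since X^T X = n B^T B and
  Y^T Y = n B B^T, Sylvester's identity x^p chi_(B^T B) = x^q chi_(B B^T) shows that chi_D and
  chi_C differ only by a power of x, which the zero block supplies. Polynomial identities are
  checked at nonzero points only, where the scalar blocks are invertible.
\<close>

lemma poly_eq_if_eq_off_zero:
  fixes f g :: "'a :: {idom, ring_char_0} poly"
  assumes "\<And>x. x \<noteq> 0 \<Longrightarrow> poly f x = poly g x"
  shows "f = g"
proof -
  have "poly ([:0, 1:] * f) = poly ([:0, 1:] * g)"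
    using assms by (auto simp: fun_eq_iff)
  then have "[:0, 1:] * f = [:0, 1:] * g"
    by (simp only: poly_eq_poly_eq_iff)
  then show ?thesis by simp
qed

lemma poly_char_poly_eq_det:
  fixes A :: "'a :: field mat"
  assumes A: "A \<in> carrier_mat n n"
  shows "poly (char_poly A) k = det (k \<cdot>\<^sub>m 1\<^sub>m n - A)"
proof -
  have "- char_matrix A k = k \<cdot>\<^sub>m 1\<^sub>m n - A"
    by (rule eq_matI) (use A in \<open>auto simp: char_matrix_def\<close>)
  then show ?thesis using char_poly_matrix[OF A] by simp
qed

lemma char_poly_direct_sum:
  fixes A :: "'a :: idom mat"
  assumes A: "A \<in> carrier_mat a a" and B: "B \<in> carrier_mat b b"
  shows "char_poly (direct_sum A B) = char_poly A * char_poly B"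
proof -
  have "char_poly_matrix (direct_sum A B)
      = four_block_mat (char_poly_matrix A) (0\<^sub>m a b) (0\<^sub>m b a) (char_poly_matrix B)"
    by (rule eq_matI) (use A B in \<open>auto simp: char_poly_matrix_def direct_sum_def\<close>)
  then show ?thesis
    unfolding char_poly_def
    by (simp add: det_four_block_mat_upper_right_zero[of _ a _ b] A B)
qed

lemma char_poly_zero_mat: "char_poly (0\<^sub>m m m :: 'a :: comm_ring_1 mat) = [:0, 1:] ^ m"
proof -
  have "upper_triangular (0\<^sub>m m m :: 'a mat)"
    by (simp add: upper_triangular_def)
  moreover have "diag_mat (0\<^sub>m m m :: 'a mat) = replicate m 0"
    by (rule nth_equalityI) (auto simp: diag_mat_def)
  ultimately show ?thesis
    by (simp add: char_poly_upper_triangular[of _ m] prod_list_replicate)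
qed

lemma det_four_block_mat_scalar_upper_left:
  fixes M N D :: "'a :: field mat"
  assumes M: "M \<in> carrier_mat a b" and N: "N \<in> carrier_mat b a"
    and D: "D \<in> carrier_mat b b" and x: "x \<noteq> 0"
  shows "det (four_block_mat (x \<cdot>\<^sub>m 1\<^sub>m a) M N D)
    = x ^ a * det (D - (1 / x) \<cdot>\<^sub>m (N * M))"
proof -
  let ?A = "four_block_mat (x \<cdot>\<^sub>m 1\<^sub>m a) M N D"
  let ?T = "four_block_mat (1\<^sub>m a) (- (1 / x) \<cdot>\<^sub>m M) (0\<^sub>m b a) (1\<^sub>m b)"
  have det_T: "det ?T = 1"
    using M by (simp add: det_four_block_mat_lower_left_zero[of _ a _ b])
  have "?A * ?T = four_block_mat (x \<cdot>\<^sub>m 1\<^sub>m a) (0\<^sub>m a b) N (D - (1 / x) \<cdot>\<^sub>m (N * M))"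
    using M N D x
    by (subst mult_four_block_mat[of _ a a _ b _ b]) (auto intro!: cong_four_block_mat)
  then have "det (?A * ?T) = x ^ a * det (D - (1 / x) \<cdot>\<^sub>m (N * M))"
    by (simp only:, subst det_four_block_mat_upper_right_zero[of _ a _ b]) (use M N D in auto)
  moreover have "det (?A * ?T) = det ?A"
    using M N D det_T by (subst det_mult[of _ "a + b"]) auto
  ultimately show ?thesis by simp
qed

lemma det_four_block_mat_scalar_lower_right:
  fixes A M N :: "'a :: field mat"
  assumes A: "A \<in> carrier_mat a a" and M: "M \<in> carrier_mat a b" and N: "N \<in> carrier_mat b a"
    and y: "y \<noteq> 0"
  shows "det (four_block_mat A M N (y \<cdot>\<^sub>m 1\<^sub>m b))
    = y ^ b * det (A - (1 / y) \<cdot>\<^sub>m (M * N))"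
proof -
  let ?A = "four_block_mat A M N (y \<cdot>\<^sub>m 1\<^sub>m b)"
  let ?T = "four_block_mat (1\<^sub>m a) (0\<^sub>m a b) (- (1 / y) \<cdot>\<^sub>m N) (1\<^sub>m b)"
  have det_T: "det ?T = 1"
    using N by (simp add: det_four_block_mat_upper_right_zero[of _ a _ b])
  have "?A * ?T = four_block_mat (A - (1 / y) \<cdot>\<^sub>m (M * N)) M (0\<^sub>m b a) (y \<cdot>\<^sub>m 1\<^sub>m b)"
    using A M N y
    by (subst mult_four_block_mat[of _ a a _ b _ b]) (auto intro!: cong_four_block_mat)
  then have "det (?A * ?T) = y ^ b * det (A - (1 / y) \<cdot>\<^sub>m (M * N))"
    by (simp only:, subst det_four_block_mat_lower_left_zero[of _ a _ b]) (use A M N in auto)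
  moreover have "det (?A * ?T) = det ?A"
    using A M N det_T by (subst det_mult[of _ "a + b"]) auto
  ultimately show ?thesis by simp
qed

lemma char_poly_mult_commute:
  fixes M N :: "'a :: field_char_0 mat"
  assumes M: "M \<in> carrier_mat a b" and N: "N \<in> carrier_mat b a"
  shows "[:0, 1:] ^ a * char_poly (N * M) = [:0, 1:] ^ b * char_poly (M * N)"
proof (rule poly_eq_if_eq_off_zero)
  fix k :: 'a
  assume k: "k \<noteq> 0"
  \<comment> \<open>scaling \<open>M\<close> by \<open>k\<close> clears the \<open>1 / k\<close> from both Schur complements\<close>
  let ?G = "four_block_mat (k \<cdot>\<^sub>m 1\<^sub>m a) (k \<cdot>\<^sub>m M) N (k \<cdot>\<^sub>m 1\<^sub>m b)"
  have kM: "k \<cdot>\<^sub>m M \<in> carrier_mat a b" using M by simp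
  have "(1 / k) \<cdot>\<^sub>m (N * (k \<cdot>\<^sub>m M)) = N * M"
    by (subst mult_smult_distrib[OF N M]) (rule eq_matI, use M N k in auto)
  then have "det ?G = k ^ a * det (k \<cdot>\<^sub>m 1\<^sub>m b - N * M)"
    using det_four_block_mat_scalar_upper_left[OF kM N _ k, of "k \<cdot>\<^sub>m 1\<^sub>m b"] by simp
  moreover have "(1 / k) \<cdot>\<^sub>m ((k \<cdot>\<^sub>m M) * N) = M * N"
    by (subst mult_smult_assoc_mat[OF M N]) (rule eq_matI, use M N k in auto)
  then have "det ?G = k ^ b * det (k \<cdot>\<^sub>m 1\<^sub>m a - M * N)"
    using det_four_block_mat_scalar_lower_right[OF _ kM N k, of "k \<cdot>\<^sub>m 1\<^sub>m a"] by simp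
  ultimately show "poly ([:0, 1:] ^ a * char_poly (N * M)) k
      = poly ([:0, 1:] ^ b * char_poly (M * N)) k"
    using M N by (simp add: poly_char_poly_eq_det[of _ b] poly_char_poly_eq_det[of _ a])
qed

definition bipartite_mat :: "'a :: zero mat \<Rightarrow> 'a mat" where
  "bipartite_mat X = four_block_mat (0\<^sub>m (dim_col X) (dim_col X)) (transpose_mat X) X
     (0\<^sub>m (dim_row X) (dim_row X))"

lemma bipartite_mat_carrier:
  "bipartite_mat X \<in> carrier_mat (dim_col X + dim_row X) (dim_col X + dim_row X)"
  by (simp add: bipartite_mat_def)

lemma char_poly_bipartite_mat:
  fixes X :: "'a :: field_char_0 mat"
  assumes X: "X \<in> carrier_mat a b"
  shows "[:0, 1:] ^ b * char_poly (bipartite_mat X)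
       = [:0, 1:] ^ a * (char_poly (transpose_mat X * X) \<circ>\<^sub>p [:0, 0, 1:])"
proof (rule poly_eq_if_eq_off_zero)
  fix k :: 'a
  assume k: "k \<noteq> 0"
  let ?G = "transpose_mat X * X"
  have G: "?G \<in> carrier_mat b b" using X by simp
  have "k \<cdot>\<^sub>m 1\<^sub>m (b + a) - bipartite_mat X
      = four_block_mat (k \<cdot>\<^sub>m 1\<^sub>m b) (- transpose_mat X) (- X) (k \<cdot>\<^sub>m 1\<^sub>m a)"
    by (rule eq_matI) (use X in \<open>auto simp: bipartite_mat_def\<close>)
  then have "det (k \<cdot>\<^sub>m 1\<^sub>m (b + a) - bipartite_mat X)
      = k ^ a * det (k \<cdot>\<^sub>m 1\<^sub>m b - (1 / k) \<cdot>\<^sub>m ?G)"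
    using X k by (simp add: det_four_block_mat_scalar_lower_right[of _ b _ a])
  moreover have scaled: "k \<cdot>\<^sub>m (k \<cdot>\<^sub>m 1\<^sub>m b - (1 / k) \<cdot>\<^sub>m ?G) = k\<^sup>2 \<cdot>\<^sub>m 1\<^sub>m b - ?G"
    by (rule eq_matI) (use G k in \<open>auto simp: power2_eq_square field_simps\<close>)
  then have "k ^ b * det (k \<cdot>\<^sub>m 1\<^sub>m b - (1 / k) \<cdot>\<^sub>m ?G) = det (k\<^sup>2 \<cdot>\<^sub>m 1\<^sub>m b - ?G)"
    using det_smult[of k "k \<cdot>\<^sub>m 1\<^sub>m b - (1 / k) \<cdot>\<^sub>m ?G"] X by (simp only: scaled) simp
  moreover have "bipartite_mat X \<in> carrier_mat (b + a) (b + a)"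
    using X bipartite_mat_carrier[of X] by simp
  ultimately show "poly ([:0, 1:] ^ b * char_poly (bipartite_mat X)) k
      = poly ([:0, 1:] ^ a * (char_poly ?G \<circ>\<^sub>p [:0, 0, 1:])) k"
    using G by (simp add: poly_char_poly_eq_det[of _ "b + a"] poly_char_poly_eq_det[of _ b]
        poly_pcompose power2_eq_square)
qed

lemma char_poly_bipartite_mat_eq_direct_sum_zero:
  fixes X Y :: "'a :: field_char_0 mat"
  assumes X: "X \<in> carrier_mat a b" and Y: "Y \<in> carrier_mat c d"
    and dims: "a + b = c + d + m"
    and gram: "[:0, 1:] ^ d * char_poly (transpose_mat X * X)
      = [:0, 1:] ^ b * char_poly (transpose_mat Y * Y)"
  shows "char_poly (bipartite_mat X) = char_poly (direct_sum (bipartite_mat Y) (0\<^sub>m m m))"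
proof (rule poly_eq_if_eq_off_zero)
  fix k :: 'a
  assume k: "k \<noteq> 0"
  have exponents: "a + 2 * b = b + d + m + c"
    using dims by simp
  define P where "P = poly (char_poly (transpose_mat Y * Y)) (k\<^sup>2)"
  have "k ^ (b + 2 * d) * poly (char_poly (bipartite_mat X)) k
      = (k\<^sup>2) ^ d * (k ^ b * poly (char_poly (bipartite_mat X)) k)"
    by (simp add: power_add algebra_simps flip: power_mult)
  also have "\<dots> = k ^ a * ((k\<^sup>2) ^ d * poly (char_poly (transpose_mat X * X)) (k\<^sup>2))"
    using arg_cong[where f = "\<lambda>f. poly f k", OF char_poly_bipartite_mat[OF X]]
    by (simp add: poly_pcompose power2_eq_square)
  also have "\<dots> = k ^ (a + 2 * b) * P"
    using arg_cong[where f = "\<lambda>f. poly f (k\<^sup>2)", OF gram]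
    by (simp add: P_def power_add power_mult)
  also have "\<dots> = k ^ (b + d + m) * (k ^ c * P)"
    by (simp only: exponents power_add mult.assoc)
  also have "k ^ c * P = k ^ d * poly (char_poly (bipartite_mat Y)) k"
    using arg_cong[where f = "\<lambda>f. poly f k", OF char_poly_bipartite_mat[OF Y]]
    by (simp add: P_def poly_pcompose power2_eq_square)
  also have "k ^ (b + d + m) * (k ^ d * poly (char_poly (bipartite_mat Y)) k)
      = k ^ (b + 2 * d) * poly (char_poly (direct_sum (bipartite_mat Y) (0\<^sub>m m m))) k"
    using char_poly_direct_sum[OF bipartite_mat_carrier zero_carrier_mat, of Y m]
    by (simp add: char_poly_zero_mat mult_2 mult_2_right power_add algebra_simps)
  finally show "poly (char_poly (bipartite_mat X)) k
      = poly (char_poly (direct_sum (bipartite_mat Y) (0\<^sub>m m m))) k"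
    using k by simp
qed

lemma sum_lessThan_mult_mod:
  fixes f :: "nat \<Rightarrow> 'a :: comm_semiring_1"
  shows "(\<Sum>i<n * p. f (i mod p)) = of_nat n * (\<Sum>i<p. f i)"
proof -
  have block: "(\<Sum>i\<in>{j * p..<j * p + p}. f (i mod p)) = (\<Sum>i<p. f i)" for j
    using sum.shift_bounds_nat_ivl[of "\<lambda>i. f (i mod p)" 0 "j * p" p]
    by (auto simp: add.commute lessThan_atLeast0 intro!: sum.cong)
  have "(\<Sum>i<n * p. f (i mod p)) = (\<Sum>j<n. \<Sum>i\<in>{j * p..<j * p + p}. f (i mod p))"
    by (rule sum.nat_group[symmetric])
  then show ?thesis by (simp add: block)
qed

definition repeat_rows :: "nat \<Rightarrow> 'a mat \<Rightarrow> 'a mat" where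
  "repeat_rows n B = mat (n * dim_row B) (dim_col B) (\<lambda>(i, j). B $$ (i mod dim_row B, j))"

lemma repeat_rows_carrier: "repeat_rows n B \<in> carrier_mat (n * dim_row B) (dim_col B)"
  by (simp add: repeat_rows_def)

lemma transpose_repeat_rows_mult:
  fixes B :: "'a :: comm_semiring_1 mat"
  shows "transpose_mat (repeat_rows n B) * repeat_rows n B = of_nat n \<cdot>\<^sub>m (transpose_mat B * B)"
proof (rule eq_matI)
  fix i j
  assume i: "i < dim_row (of_nat n \<cdot>\<^sub>m (transpose_mat B * B))"
    and j: "j < dim_col (of_nat n \<cdot>\<^sub>m (transpose_mat B * B))"
  have "(transpose_mat (repeat_rows n B) * repeat_rows n B) $$ (i, j)
      = (\<Sum>k<n * dim_row B. B $$ (k mod dim_row B, i) * B $$ (k mod dim_row B, j))"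
    using i j by (auto simp: repeat_rows_def scalar_prod_def lessThan_atLeast0 intro!: sum.cong)
  also have "\<dots> = of_nat n * (\<Sum>k<dim_row B. B $$ (k, i) * B $$ (k, j))"
    by (rule sum_lessThan_mult_mod)
  also have "\<dots> = (of_nat n \<cdot>\<^sub>m (transpose_mat B * B)) $$ (i, j)"
    using i j by (auto simp: scalar_prod_def lessThan_atLeast0 intro!: sum.cong)
  finally show "(transpose_mat (repeat_rows n B) * repeat_rows n B) $$ (i, j)
      = (of_nat n \<cdot>\<^sub>m (transpose_mat B * B)) $$ (i, j)" .
qed (simp_all add: repeat_rows_def)

lemma blockD_eq_bipartite_mat:
  assumes "B \<in> carrier_mat p q"
  shows "blockD n p q B = bipartite_mat (repeat_rows n B)"
  by (cases "p = 0")
    (rule eq_matI; use assms in \<open>auto simp: blockD_def bipartite_mat_def repeat_rows_def\<close>)+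

lemma blockC_eq_blockD_transpose: "blockC n p q B = blockD n q p (transpose_mat B)"
  unfolding blockC_def blockD_def transpose_transpose ..

theorem theorem3p2:
  fixes B :: "real mat" and n p q :: nat
  assumes "q \<ge> 1" and "p \<ge> q" and "n \<ge> 1"
    and "B \<in> carrier_mat p q"
  shows "cospectral (blockD n p q B)
           (direct_sum (blockC n p q B) (0\<^sub>m ((n-1)*(p-q)) ((n-1)*(p-q))))"
proof -
  let ?X = "repeat_rows n B" and ?Y = "repeat_rows n (transpose_mat B)"
  have B: "B \<in> carrier_mat p q" and Bt: "transpose_mat B \<in> carrier_mat q p"
    using assms(4) by auto
  have X: "?X \<in> carrier_mat (n * p) q" and Y: "?Y \<in> carrier_mat (n * q) p"
    using repeat_rows_carrier[of n B] repeat_rows_carrier[of n "transpose_mat B"] B by auto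
  have D: "blockD n p q B = bipartite_mat ?X"
    using blockD_eq_bipartite_mat[OF B] .
  have C: "blockC n p q B = bipartite_mat ?Y"
    unfolding blockC_eq_blockD_transpose by (rule blockD_eq_bipartite_mat[OF Bt])
  have "transpose_mat ?X * ?X = transpose_mat B * (of_nat n \<cdot>\<^sub>m B)"
    and "transpose_mat ?Y * ?Y = (of_nat n \<cdot>\<^sub>m B) * transpose_mat B"
    using B by (simp_all add: transpose_repeat_rows_mult mult_smult_distrib mult_smult_assoc_mat)
  then have gram: "[:0, 1:] ^ p * char_poly (transpose_mat ?X * ?X)
      = [:0, 1:] ^ q * char_poly (transpose_mat ?Y * ?Y)"
    using char_poly_mult_commute[of "of_nat n \<cdot>\<^sub>m B" p q "transpose_mat B"] B by simp
  obtain r where r: "p = q + r" using assms(2) le_Suc_ex by blast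
  have dims: "n * p + q = n * q + p + (n - 1) * (p - q)"
    using assms(3) unfolding r by (cases n) (simp_all add: algebra_simps)
  show ?thesis
    using char_poly_bipartite_mat_eq_direct_sum_zero[OF X Y dims gram] X Y
    unfolding cospectral_def D C
    by (auto simp: bipartite_mat_def direct_sum_def)
qed

end
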